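(* Let $0\le j_2\le j_1$ be integers (so $(j_1,j_2,j_1-j_2)$ is admissible). Then $$\phi_{j_1,j_2,j_1-j_2}(x_{12},x_{13},1)=\sum_{a=0}^{j_2}\sum_{b=0}^{j_1-j_2}c_{a,b}\,(x_{12}+x_{12}^{-1})^{j_2-a}(x_{13}+x_{13}^{-1})^{j_1-j_2-b},$$ where $c_{a,b}=0$ if $a+b$ is odd, and if $a+b$ is even $$c_{a,b}=(-1)^{(a+b)/2}\binom{j_2}{a}\binom{j_1-j_2}{b}\frac{\left(j_1-\frac{a+b}{2}\right)!}{(j_1+1)!}\cdot\frac{(a+b)!}{\left(\frac{a+b}{2}\right)!}.$$
   Context: A triple $(j_1,j_2,j_3)$ of nonnegative integers is admissible if $|j_1-j_2|\le j_3\le j_1+j_2$ and $j_1+j_2+j_3$ is even; $\mathbf J$ denotes the set of admissible triples. Let $\mathcal H=\mathbb C[x_{12}+x_{12}^{-1},x_{13}+x_{13}^{-1},x_{23}+x_{23}^{-1}]\subset\mathbb C[x_{12}^{\pm1},x_{13}^{\pm1},x_{23}^{\pm1}]$. For $a,b\in\{\pm1\}$ set $K_{a,b}(j_1,j_2,j_3)=ab\,\frac{(aj_1+bj_2+j_3+a+b+2)(aj_1+bj_2-j_3+a+b)}{4(j_1+1)(j_2+1)}$. The genus two Schur polynomials $(\phi_{j_1,j_2,j_3})_{(j_1,j_2,j_3)\in\mathbf J}$ are the unique family in $\mathcal H$ with $\phi_{0,0,0}=1$ such that for all admissible $(j_1,j_2,j_3)$: $(x_{12}+x_{12}^{-1})\phi_{j_1,j_2,j_3}=\sum_{a,b\in\{\pm1\}}K_{a,b}(j_1,j_2,j_3)\phi_{j_1+a,j_2+b,j_3}$,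 $(x_{13}+x_{13}^{-1})\phi_{j_1,j_2,j_3}=\sum_{a,b\in\{\pm1\}}K_{a,b}(j_1,j_3,j_2)\phi_{j_1+a,j_2,j_3+b}$, $(x_{23}+x_{23}^{-1})\phi_{j_1,j_2,j_3}=\sum_{a,b\in\{\pm1\}}K_{a,b}(j_2,j_3,j_1)\phi_{j_1,j_2+a,j_3+b}$, where $\phi$ of a non-admissible triple is interpreted as $0$. *)

theory Defs
  imports Complex_Main
begin

text \<open>Admissible triples (indices are integers so that shifts by -1 make sense).\<close>
definition admissible :: "int \<Rightarrow> int \<Rightarrow> int \<Rightarrow> bool" where
  "admissible j1 j2 j3 \<longleftrightarrow> 0 \<le> j1 \<and> 0 \<le> j2 \<and> 0 \<le> j3 \<and>
     \<bar>j1 - j2\<bar> \<le> j3 \<and> j3 \<le> j1 + j2 \<and> even (j1 + j2 + j3)"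

definition Kc :: "int \<Rightarrow> int \<Rightarrow> int \<Rightarrow> int \<Rightarrow> int \<Rightarrow> complex" where
  "Kc a b j1 j2 j3 = of_int (a * b) *
     (of_int ((a*j1 + b*j2 + j3 + a + b + 2) * (a*j1 + b*j2 - j3 + a + b))
      / of_int (4 * (j1 + 1) * (j2 + 1)))"

definition phiA :: "(int \<Rightarrow> int \<Rightarrow> int \<Rightarrow> complex \<Rightarrow> complex \<Rightarrow> complex \<Rightarrow> complex)
     \<Rightarrow> int \<Rightarrow> int \<Rightarrow> int \<Rightarrow> complex \<Rightarrow> complex \<Rightarrow> complex \<Rightarrow> complex" where
  "phiA \<phi> j1 j2 j3 = (if admissible j1 j2 j3 then \<phi> j1 j2 j3 else (\<lambda>_ _ _. 0))"

text \<open>Membership in H = C[x12+1/x12, x13+1/x13, x23+1/x23], viewed as functions on (C*)^3.\<close>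
definition in_H :: "(complex \<Rightarrow> complex \<Rightarrow> complex \<Rightarrow> complex) \<Rightarrow> bool" where
  "in_H f \<longleftrightarrow> (\<exists>(c :: nat \<Rightarrow> nat \<Rightarrow> nat \<Rightarrow> complex) N. \<forall>x y z.
      x \<noteq> 0 \<longrightarrow> y \<noteq> 0 \<longrightarrow> z \<noteq> 0 \<longrightarrow>
      f x y z = (\<Sum>p\<le>N. \<Sum>q\<le>N. \<Sum>r\<le>N.
                   c p q r * (x + 1/x)^p * (y + 1/y)^q * (z + 1/z)^r))"

definition genus2_schur :: "(int \<Rightarrow> int \<Rightarrow> int \<Rightarrow> complex \<Rightarrow> complex \<Rightarrow> complex \<Rightarrow> complex) \<Rightarrow> bool" where
  "genus2_schur \<phi> \<longleftrightarrow>
     (\<forall>j1 j2 j3. admissible j1 j2 j3 \<longrightarrow> in_H (\<phi> j1 j2 j3)) \<and>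
     (\<forall>x y z. x \<noteq> 0 \<longrightarrow> y \<noteq> 0 \<longrightarrow> z \<noteq> 0 \<longrightarrow> \<phi> 0 0 0 x y z = 1) \<and>
     (\<forall>j1 j2 j3 x y z. admissible j1 j2 j3 \<longrightarrow> x \<noteq> 0 \<longrightarrow> y \<noteq> 0 \<longrightarrow> z \<noteq> 0 \<longrightarrow>
        (x + 1/x) * \<phi> j1 j2 j3 x y z =
          (\<Sum>a\<in>{-1,1}. \<Sum>b\<in>{-1,1}. Kc a b j1 j2 j3 * phiA \<phi> (j1+a) (j2+b) j3 x y z) \<and>
        (y + 1/y) * \<phi> j1 j2 j3 x y z =
          (\<Sum>a\<in>{-1,1}. \<Sum>b\<in>{-1,1}. Kc a b j1 j3 j2 * phiA \<phi> (j1+a) j2 (j3+b) x y z) \<and>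
        (z + 1/z) * \<phi> j1 j2 j3 x y z =
          (\<Sum>a\<in>{-1,1}. \<Sum>b\<in>{-1,1}. Kc a b j2 j3 j1 * phiA \<phi> j1 (j2+a) (j3+b) x y z))"

definition cab :: "nat \<Rightarrow> nat \<Rightarrow> nat \<Rightarrow> nat \<Rightarrow> complex" where
  "cab j1 j2 a b = (if odd (a + b) then 0 else
     (-1) ^ ((a + b) div 2) * of_nat (j2 choose a) * of_nat ((j1 - j2) choose b) *
     (of_nat (fact (j1 - (a + b) div 2)) / of_nat (fact (j1 + 1))) *
     (of_nat (fact (a + b)) / of_nat (fact ((a + b) div 2))))"

end

theory Submission
  imports Defs
begin

(*
  Write f m n for phi_{m+n,m,n}(x12, x13, 1), the restriction of the Schur family to the face
  j1 = j2 + j3, and put X = x12 + 1/x12, Y = x13 + 1/x13.  The x12-relation at (m+n, m, n) links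
  f (m+1) n, f (m-1) n and a single value off the face, phi_{m+n-1,m+1,n}; the x23-relation at
  (m+n-1, m, n-1), specialised to x23 = 1, contains the same off-face value.  Eliminating it gives a
  recurrence expressing f (m+1) n through values with smaller m + n, and on the edge m = 0 the
  x13-relation gives a three-term recurrence in n.  With f 0 0 = 1 these recurrences determine f.
  The claimed polynomial satisfies the same recurrences: comparing coefficients of X^i Y^j, the
  factorial ratios in c_{a,b} and binomial absorption reduce each of them to a polynomial identity
  in m, n, a, b.
*)

section \<open>Double sums of monomials\<close>

definition bipoly :: "(nat \<Rightarrow> nat \<Rightarrow> 'a) \<Rightarrow> nat \<Rightarrow> nat \<Rightarrow> 'a \<Rightarrow> 'a \<Rightarrow> 'a :: comm_ring_1" where
  "bipoly c M K X Y = (\<Sum>a=0..M. \<Sum>b=0..K. c a b * X^(M-a) * Y^(K-b))"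

definition shift_coeffs :: "nat \<Rightarrow> nat \<Rightarrow> (nat \<Rightarrow> nat \<Rightarrow> 'a) \<Rightarrow> nat \<Rightarrow> nat \<Rightarrow> 'a :: zero" where
  "shift_coeffs p q c a b = (if p \<le> a \<and> q \<le> b then c (a - p) (b - q) else 0)"

lemma sum_atLeast0_pad:
  fixes M p :: nat
  shows "(\<Sum>a=0..M. f a) = (\<Sum>a=0..M+p. if p \<le> a then f (a - p) else 0)"
proof -
  have "(\<Sum>a=0..M+p. if p \<le> a then f (a - p) else 0) =
      (\<Sum>a\<in>{a\<in>{0..M+p}. p \<le> a}. f (a - p))"
    by (rule sum.inter_filter[symmetric]) simp
  also have "{a\<in>{0..M+p}. p \<le> a} = {0+p..M+p}" by auto
  also have "(\<Sum>a\<in>\<dots>. f (a - p)) = (\<Sum>a=0..M. f a)"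
    by (subst sum.shift_bounds_cl_nat_ivl) simp
  finally show ?thesis ..
qed

lemma bipoly_cong:
  "(\<And>a b. a \<le> M \<Longrightarrow> b \<le> K \<Longrightarrow> c a b = d a b) \<Longrightarrow> bipoly c M K X Y = bipoly d M K X Y"
  unfolding bipoly_def by (intro sum.cong refl) auto

lemma bipoly_add: "bipoly (\<lambda>a b. c a b + d a b) M K X Y = bipoly c M K X Y + bipoly d M K X Y"
  unfolding bipoly_def by (simp add: sum.distrib algebra_simps)

lemma bipoly_diff: "bipoly (\<lambda>a b. c a b - d a b) M K X Y = bipoly c M K X Y - bipoly d M K X Y"
  unfolding bipoly_def by (simp add: sum_subtractf algebra_simps)

lemma bipoly_cmult: "bipoly (\<lambda>a b. r * c a b) M K X Y = r * bipoly c M K X Y"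
  unfolding bipoly_def by (simp add: sum_distrib_left algebra_simps)

lemma bipoly_swap: "bipoly c M K X Y = bipoly (\<lambda>b a. c a b) K M Y X"
  unfolding bipoly_def by (subst sum.swap) (simp add: mult_ac)

lemma bipoly_mult_X:
  assumes "\<And>b. c (Suc M) b = 0"
  shows "X * bipoly c M K X Y = bipoly c (Suc M) K X Y"
  using assms unfolding bipoly_def
  by (simp add: sum_distrib_left Suc_diff_le mult_ac)

lemma bipoly_pad: "bipoly c M K X Y = bipoly (shift_coeffs p q c) (M + p) (K + q) X Y"
proof -
  have "(\<Sum>b=0..K. c a b * X^(M-a) * Y^(K-b)) =
      (\<Sum>b=0..K+q. if q \<le> b then c a (b - q) * X^(M-a) * Y^(K+q-b) else 0)" for a
    by (subst sum_atLeast0_pad[of _ K q]) (auto intro!: sum.cong)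
  then have "bipoly c M K X Y =
      (\<Sum>a=0..M. \<Sum>b=0..K+q. if q \<le> b then c a (b - q) * X^(M-a) * Y^(K+q-b) else 0)"
    unfolding bipoly_def by simp
  also have "\<dots> = (\<Sum>a=0..M+p. if p \<le> a then
      (\<Sum>b=0..K+q. if q \<le> b then c (a - p) (b - q) * X^(M-(a-p)) * Y^(K+q-b) else 0) else 0)"
    by (rule sum_atLeast0_pad)
  also have "\<dots> = bipoly (shift_coeffs p q c) (M + p) (K + q) X Y"
    unfolding bipoly_def shift_coeffs_def by (auto intro!: sum.cong)
  finally show ?thesis .
qed

lemma bipoly_pad_scaled:
  assumes "r \<noteq> 0 \<Longrightarrow> M' = M + p \<and> K' = K + q"
  shows "r * bipoly c M K X Y = bipoly (\<lambda>a b. r * shift_coeffs p q c a b) M' K' X Y"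
proof (cases "r = 0")
  case True
  then show ?thesis using bipoly_cmult[of 0 _ M' K' X Y] by simp
next
  case False
  then show ?thesis using assms bipoly_pad[of c M K X Y p q] by (simp add: bipoly_cmult)
qed

section \<open>The coefficients c_{a,b} on the face\<close>

lemma of_nat_binomial_absorption:
  "of_nat n * (if 1 \<le> k then of_nat ((n - 1) choose (k - 1)) else 0) =
    (of_nat k * of_nat (n choose k) :: 'a :: semiring_1)"
proof (cases k)
  case (Suc k')
  have "n * ((n - 1) choose (k - 1)) = k * (n choose k)"
    using binomial_absorption[of k' n] Suc by simp
  then have "(of_nat (n * ((n - 1) choose (k - 1))) :: 'a) = of_nat (k * (n choose k))"
    by (rule arg_cong)
  then show ?thesis using Suc by (simp only: of_nat_mult) simp
qed simp

lemma of_nat_binomial_absorption2: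
  "of_nat (n * (n - 1)) * (if 2 \<le> k then of_nat ((n - 2) choose (k - 2)) else 0) =
    (of_nat k * (of_nat k - 1) * of_nat (n choose k) :: 'a :: comm_ring_1)"
proof (cases "2 \<le> k")
  case True
  then obtain k' where k: "k = Suc (Suc k')" by (metis add_2_eq_Suc le_Suc_ex)
  have absorb1: "k * (n choose k) = n * ((n - 1) choose (k - 1))"
    using binomial_absorption[of "Suc k'" n] k by simp
  have absorb2: "(k - 1) * ((n - 1) choose (k - 1)) = (n - 1) * ((n - 2) choose (k - 2))"
    using binomial_absorption[of k' "n - 1"] k by (simp add: numeral_2_eq_2)
  have "(k - 1) * (k * (n choose k)) = n * ((k - 1) * ((n - 1) choose (k - 1)))"
    unfolding absorb1 by (simp only: mult_ac)
  also have "\<dots> = n * (n - 1) * ((n - 2) choose (k - 2))"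
    unfolding absorb2 by (simp only: mult_ac)
  finally have "(of_nat ((k - 1) * (k * (n choose k))) :: 'a) =
      of_nat (n * (n - 1) * ((n - 2) choose (k - 2)))"
    by (rule arg_cong)
  then show ?thesis using True by (simp add: of_nat_diff mult_ac)
next
  case False
  then have "k = 0 \<or> k = 1" by auto
  then show ?thesis by auto
qed

definition face_weight :: "nat \<Rightarrow> nat \<Rightarrow> 'a :: field_char_0" where
  "face_weight N k = fact (N - k) / fact (N + 1) * (fact (2 * k) / fact k)"

lemma face_weight_0: "of_nat (N + 1) * face_weight N 0 = 1"
proof -
  have "(fact (N + 1) :: 'a) = of_nat (N + 1) * fact N"
    by (metis Suc_eq_plus1 fact_Suc)
  then show ?thesis
    unfolding face_weight_def by (simp del: of_nat_Suc of_nat_add)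
qed

lemma face_weight_Suc:
  assumes "k \<le> N"
  shows "of_nat (N + 2) * face_weight (N + 1) k = of_nat (N + 1 - k) * face_weight N k"
proof -
  have "(fact (N + 1 - k) :: 'a) = of_nat (N + 1 - k) * fact (N - k)"
    using assms by (metis Suc_diff_le Suc_eq_plus1 fact_Suc)
  moreover have "(fact (N + 2) :: 'a) = of_nat (N + 2) * fact (N + 1)"
    by (metis add_Suc_right Suc_eq_plus1 one_add_one fact_Suc)
  ultimately show ?thesis
    unfolding face_weight_def by (simp del: of_nat_Suc of_nat_add)
qed

lemma face_weight_Suc_Suc:
  assumes "k \<le> N"
  shows "of_nat (N + 2) * face_weight (N + 1) (k + 1) = 2 * of_nat (2 * k + 1) * face_weight N k"
proof -
  have "(fact (2 * k + 2) :: 'a) = of_nat (2 * k + 2) * of_nat (2 * k + 1) * fact (2 * k)"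
    by (metis add_Suc_right Suc_eq_plus1 one_add_one fact_Suc mult.assoc)
  moreover have "(fact (N + 2) :: 'a) = of_nat (N + 2) * fact (N + 1)"
    by (metis add_Suc_right Suc_eq_plus1 one_add_one fact_Suc)
  moreover have "(fact (k + 1) :: 'a) = of_nat (k + 1) * fact k"
    by (metis Suc_eq_plus1 fact_Suc)
  moreover have "(of_nat (2 * k + 2) :: 'a) = 2 * of_nat (k + 1)"
    by simp
  ultimately show ?thesis
    unfolding face_weight_def by (simp add: mult_ac del: of_nat_Suc of_nat_add)
qed

definition face_coeff :: "nat \<Rightarrow> nat \<Rightarrow> nat \<Rightarrow> nat \<Rightarrow> complex" where
  "face_coeff m n = cab (m + n) m"

lemma face_coeff_even:
  "a + b = 2 * k \<Longrightarrow>
    face_coeff m n a b = (-1) ^ k * of_nat (m choose a) * of_nat (n choose b) * face_weight (m + n) k"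
  unfolding face_coeff_def cab_def face_weight_def by (simp add: of_nat_fact del: fact_Suc of_nat_add)

lemma face_coeff_odd: "odd (a + b) \<Longrightarrow> face_coeff m n a b = 0"
  unfolding face_coeff_def cab_def by simp

lemma face_coeff_eq_0: "m < a \<or> n < b \<Longrightarrow> face_coeff m n a b = 0"
  unfolding face_coeff_def cab_def by (elim disjE) (simp_all add: binomial_eq_0)

lemma face_coeff_swap: "face_coeff m n a b = face_coeff n m b a"
  unfolding face_coeff_def cab_def by (simp add: add.commute mult_ac)

lemma face_coeff_0_0: "of_nat (m + n + 1) * face_coeff m n 0 0 = 1"
  using face_coeff_even[of 0 0 0 m n] face_weight_0[where 'a=complex, of "m + n"] by simp

lemma shift_face_coeff:
  assumes "a + b = 2 * (j + 1)" "p + q = 2"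
  shows "shift_coeffs p q (face_coeff m n) a b = (-1) ^ j *
    (if p \<le> a then of_nat (m choose (a - p)) else 0) *
    (if q \<le> b then of_nat (n choose (b - q)) else 0) * face_weight (m + n) j"
proof (cases "p \<le> a \<and> q \<le> b")
  case True
  then have "p \<le> a" "q \<le> b" by auto
  then have "(a - p) + (b - q) = (a + b) - (p + q)" by simp
  also have "\<dots> = 2 * j" using assms by simp
  finally have "face_coeff m n (a - p) (b - q) =
      (-1) ^ j * of_nat (m choose (a - p)) * of_nat (n choose (b - q)) * face_weight (m + n) j"
    by (rule face_coeff_even)
  then show ?thesis
    unfolding shift_coeffs_def using True by (simp only: simp_thms if_True)
next
  case False
  then show ?thesis unfolding shift_coeffs_def by (cases "p \<le> a") simp_all
qed

lemma shift_face_coeff_odd: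
  assumes "odd (a + b)" "p + q = 2"
  shows "shift_coeffs p q (face_coeff m n) a b = 0"
proof (cases "p \<le> a \<and> q \<le> b")
  case True
  then have "a + b = ((a - p) + (b - q)) + 2" using assms(2) by auto
  with assms(1) have "odd ((a - p) + (b - q))" by (metis even_add even_numeral)
  then have "face_coeff m n (a - p) (b - q) = 0" by (rule face_coeff_odd)
  with True show ?thesis unfolding shift_coeffs_def by simp
qed (auto simp: shift_coeffs_def)

text \<open>
  For a + b = 2 (j + 1) every term of the recurrence below is a rational multiple of the common
  factor (-1)^j C(m+1, a) C(n, b) face_weight (m+n-1) j, and after dividing it out only a polynomial
  identity in m, n, a, b remains.
\<close>

context
  fixes m n a b j :: nat
  assumes ab_even: "a + b = 2 * (j + 1)" and a_le: "a \<le> m + 1" and b_le: "b \<le> n"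
begin

private abbreviation (input) common :: complex where
  "common \<equiv> (-1) ^ j * of_nat (m + 1 choose a) * of_nat (n choose b) * face_weight (m + n - 1) j"

private lemma j_le: "j + 1 \<le> m + n"
  using ab_even a_le b_le by arith

private lemma face_weight_step:
  "of_nat (m + n + 1) * face_weight (m + n) (j + 1) =
    2 * of_nat (2 * j + 1) * (face_weight (m + n - 1) j :: complex)"
proof -
  have "m + n - 1 + 1 = m + n" "j \<le> m + n - 1" using j_le by linarith+
  then show ?thesis
    using face_weight_Suc_Suc[where 'a=complex, of j "m + n - 1"] by (simp add: add.assoc)
qed

private lemma face_coeff_Suc_scaled:
  "of_nat ((m + n + 2) * (m + n + 1)) * face_coeff (m + 1) n a b =
    - (of_nat (m + n - j) * 2 * of_nat (2 * j + 1) * common)"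
proof -
  have weight_Suc: "of_nat (m + n + 2) * face_weight (m + n + 1) (j + 1) =
      of_nat (m + n - j) * (face_weight (m + n) (j + 1) :: complex)"
    using face_weight_Suc[where 'a=complex, of "j + 1" "m + n"] j_le by simp
  have "face_coeff (m + 1) n a b = - ((-1) ^ j * of_nat (m + 1 choose a) * of_nat (n choose b) *
      face_weight (m + n + 1) (j + 1))"
    using face_coeff_even[OF ab_even, of "m + 1" n] by (simp add: add.commute add.left_commute)
  then have "of_nat ((m + n + 2) * (m + n + 1)) * face_coeff (m + 1) n a b =
      - ((-1) ^ j * of_nat (m + 1 choose a) * of_nat (n choose b) * of_nat (m + n + 1) *
        (of_nat (m + n + 2) * face_weight (m + n + 1) (j + 1)))"
    by (simp only: of_nat_mult mult_ac mult_minus_right)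
  also have "\<dots> = - ((-1) ^ j * of_nat (m + 1 choose a) * of_nat (n choose b) * of_nat (m + n - j) *
      (of_nat (m + n + 1) * face_weight (m + n) (j + 1)))"
    unfolding weight_Suc by (simp only: mult_ac)
  also have "\<dots> = - (of_nat (m + n - j) * 2 * of_nat (2 * j + 1) * common)"
    unfolding face_weight_step by (simp only: mult_ac)
  finally show ?thesis .
qed

private lemma face_coeff_scaled:
  "of_nat (m + 1) * (of_nat ((m + n + 1)\<^sup>2) * face_coeff m n a b) =
    - (of_nat (m + 1 - a) * of_nat (m + n + 1) * 2 * of_nat (2 * j + 1) * common)"
proof -
  have absorb: "of_nat (m + 1) * of_nat (m choose a) =
      (of_nat (m + 1 - a) * of_nat (m + 1 choose a) :: complex)"
    using binomial_absorb_comp[of "m + 1" a] by (metis of_nat_mult add_diff_cancel_right')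
  have "of_nat (m + 1) * (of_nat ((m + n + 1)\<^sup>2) * face_coeff m n a b) =
      - ((-1) ^ j * (of_nat (m + 1) * of_nat (m choose a)) * of_nat (n choose b) * of_nat (m + n + 1) *
        (of_nat (m + n + 1) * face_weight (m + n) (j + 1)))"
    using face_coeff_even[OF ab_even, of m n] by (simp add: power2_eq_square algebra_simps)
  also have "\<dots> = - (of_nat (m + 1 - a) * of_nat (m + n + 1) * 2 * of_nat (2 * j + 1) * common)"
    unfolding absorb face_weight_step by (simp only: mult_ac)
  finally show ?thesis .
qed

private lemma shift_face_coeff_2_0_scaled:
  "of_nat (m + 1) * (of_nat (m * (m + 2 * n + 1)) * shift_coeffs 2 0 (face_coeff (m - 1) n) a b) =
    of_nat (m + 2 * n + 1) * of_nat a * (of_nat a - 1) * common"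
proof (cases m)
  case 0
  with a_le have "a = 0 \<or> a = 1" by auto
  with 0 show ?thesis by auto
next
  case (Suc m')
  have absorb: "of_nat ((m + 1) * m) * (if 2 \<le> a then of_nat ((m - 1) choose (a - 2)) else 0) =
      (of_nat a * (of_nat a - 1) * of_nat (m + 1 choose a) :: complex)"
    using of_nat_binomial_absorption2[where 'a=complex, of "m + 1" a]
    unfolding add_diff_cancel_right' diff_diff_left[symmetric, of "m + 1" 1 1, unfolded one_add_one] .
  have idx: "m - 1 + n = m + n - 1" using Suc by simp
  have "of_nat (m + 1) * (of_nat (m * (m + 2 * n + 1)) * shift_coeffs 2 0 (face_coeff (m - 1) n) a b) =
     (-1) ^ j * of_nat (m + 2 * n + 1) *
     (of_nat ((m + 1) * m) * (if 2 \<le> a then of_nat ((m - 1) choose (a - 2)) else 0)) *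
     of_nat (n choose b) * face_weight (m + n - 1) j"
    using shift_face_coeff[OF ab_even, of 2 0 "m - 1" n] unfolding idx by (simp add: algebra_simps)
  then show ?thesis unfolding absorb by (simp only: mult_ac)
qed

private lemma shift_face_coeff_1_1_scaled:
  "of_nat (m + 1) * (of_nat (2 * n\<^sup>2) * shift_coeffs 1 1 (face_coeff m (n - 1)) a b) =
    2 * of_nat n * of_nat a * of_nat b * common"
proof (cases n)
  case 0
  then show ?thesis by simp
next
  case (Suc n')
  have absorb_m: "of_nat (m + 1) * (if 1 \<le> a then of_nat (m choose (a - 1)) else 0) =
      (of_nat a * of_nat (m + 1 choose a) :: complex)"
    using of_nat_binomial_absorption[where 'a=complex, of "m + 1" a]
    by (simp only: add_diff_cancel_right')
  have absorb_n: "of_nat n * (if 1 \<le> b then of_nat ((n - 1) choose (b - 1)) else 0) =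
      (of_nat b * of_nat (n choose b) :: complex)"
    by (rule of_nat_binomial_absorption)
  have idx: "m + (n - 1) = m + n - 1" using Suc by simp
  have "of_nat (m + 1) * (of_nat (2 * n\<^sup>2) * shift_coeffs 1 1 (face_coeff m (n - 1)) a b) =
      2 * of_nat n * ((-1) ^ j *
        (of_nat (m + 1) * (if 1 \<le> a then of_nat (m choose (a - 1)) else 0)) *
        (of_nat n * (if 1 \<le> b then of_nat ((n - 1) choose (b - 1)) else 0)) *
        face_weight (m + n - 1) j)"
    using shift_face_coeff[OF ab_even, of 1 1 m "n - 1"] unfolding idx
    by (simp add: power2_eq_square mult_ac)
  then show ?thesis unfolding absorb_m absorb_n by (simp only: mult_ac)
qed

private lemma shift_face_coeff_0_2_scaled:
  "of_nat (n * (n - 1)) * shift_coeffs 0 2 (face_coeff (m + 1) (n - 2)) a b =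
    of_nat b * (of_nat b - 1) * common"
proof (cases "n < 2")
  case True
  with b_le have "b = 0 \<or> b = 1" by auto
  with True show ?thesis by (auto simp: less_2_cases_iff)
next
  case False
  then have idx: "m + 1 + (n - 2) = m + n - 1" by simp
  have "of_nat (n * (n - 1)) * shift_coeffs 0 2 (face_coeff (m + 1) (n - 2)) a b =
      (-1) ^ j * of_nat (m + 1 choose a) *
      (of_nat (n * (n - 1)) * (if 2 \<le> b then of_nat ((n - 2) choose (b - 2)) else 0)) *
      face_weight (m + n - 1) j"
    using shift_face_coeff[OF ab_even, of 0 2 "m + 1" "n - 2"] unfolding idx by (simp add: mult_ac)
  then show ?thesis unfolding of_nat_binomial_absorption2 by (simp only: mult_ac)
qed

lemma face_coeff_recurrence_even:
  "of_nat ((m + n + 2) * (m + n + 1)) * face_coeff (m + 1) n a b =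
    of_nat ((m + n + 1)\<^sup>2) * face_coeff m n a b
    - of_nat (m * (m + 2 * n + 1)) * shift_coeffs 2 0 (face_coeff (m - 1) n) a b
    - of_nat (2 * n\<^sup>2) * shift_coeffs 1 1 (face_coeff m (n - 1)) a b
    + of_nat (n * (n - 1)) * shift_coeffs 0 2 (face_coeff (m + 1) (n - 2)) a b"
    (is "?lhs = ?rhs")
proof -
  have "of_nat (a + b) = (of_nat (2 * (j + 1)) :: complex)" using ab_even by (rule arg_cong)
  then have ab: "of_nat a + of_nat b = (2 * of_nat j + 2 :: complex)" by simp
  have casts: "of_nat (m + n - j) = (of_nat m + of_nat n - of_nat j :: complex)"
      "of_nat (m + 1 - a) = (of_nat m + 1 - of_nat a :: complex)"
    using j_le a_le by (simp_all add: of_nat_diff)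
  have "of_nat (m + 1) * ?lhs =
      - common * ((of_nat m + 1) * (of_nat m + of_nat n - of_nat j) * 2 * (2 * of_nat j + 1))"
    unfolding face_coeff_Suc_scaled casts by (simp add: algebra_simps)
  also have "(of_nat m + 1) * (of_nat m + of_nat n - of_nat j) * 2 * (2 * of_nat j + 1) =
      (of_nat m + 1 - of_nat a) * (of_nat m + of_nat n + 1) * 2 * (2 * of_nat j + 1)
      + (of_nat m + 2 * of_nat n + 1) * of_nat a * (of_nat a - 1) + 2 * of_nat n * of_nat a * of_nat b
      - (of_nat m + 1) * of_nat b * (of_nat b - (1 :: complex))"
    using ab by algebra
  also have "- common * \<dots> =
      of_nat (m + 1) * (of_nat ((m + n + 1)\<^sup>2) * face_coeff m n a b)
    - of_nat (m + 1) * (of_nat (m * (m + 2 * n + 1)) * shift_coeffs 2 0 (face_coeff (m - 1) n) a b)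
    - of_nat (m + 1) * (of_nat (2 * n\<^sup>2) * shift_coeffs 1 1 (face_coeff m (n - 1)) a b)
    + of_nat (m + 1) * (of_nat (n * (n - 1)) * shift_coeffs 0 2 (face_coeff (m + 1) (n - 2)) a b)"
    unfolding face_coeff_scaled shift_face_coeff_2_0_scaled shift_face_coeff_1_1_scaled
      shift_face_coeff_0_2_scaled casts
    by (simp add: algebra_simps)
  also have "\<dots> = of_nat (m + 1) * ?rhs"
    by (simp only: right_diff_distrib distrib_left[of "of_nat (m + 1) :: complex"])
  finally have "of_nat (m + 1) * ?lhs = of_nat (m + 1) * ?rhs" .
  moreover have "(of_nat (m + 1) :: complex) \<noteq> 0" by (simp only: of_nat_eq_0_iff)
  ultimately show ?thesis by (metis mult_left_cancel)
qed

end

lemma face_coeff_recurrence: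
  assumes "a \<le> m + 1" "b \<le> n"
  shows "of_nat ((m + n + 2) * (m + n + 1)) * face_coeff (m + 1) n a b =
    of_nat ((m + n + 1)\<^sup>2) * face_coeff m n a b
    - of_nat (m * (m + 2 * n + 1)) * shift_coeffs 2 0 (face_coeff (m - 1) n) a b
    - of_nat (2 * n\<^sup>2) * shift_coeffs 1 1 (face_coeff m (n - 1)) a b
    + of_nat (n * (n - 1)) * shift_coeffs 0 2 (face_coeff (m + 1) (n - 2)) a b"
proof (cases "even (a + b)")
  case True
  then obtain k where k: "a + b = 2 * k" by blast
  show ?thesis
  proof (cases k)
    case 0
    with k have "a = 0" "b = 0" by auto
    have "of_nat ((m + n + 2) * (m + n + 1)) * face_coeff (m + 1) n 0 0 =
        of_nat (m + n + 1) * (of_nat (m + 1 + n + 1) * face_coeff (m + 1) n 0 0)"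
      by (simp add: algebra_simps)
    also have "\<dots> = of_nat (m + n + 1)" unfolding face_coeff_0_0 by simp
    finally have lhs:
      "of_nat ((m + n + 2) * (m + n + 1)) * face_coeff (m + 1) n 0 0 = of_nat (m + n + 1)" .
    have "of_nat ((m + n + 1)\<^sup>2) * face_coeff m n 0 0 =
        of_nat (m + n + 1) * (of_nat (m + n + 1) * face_coeff m n 0 0)"
      by (simp add: algebra_simps power2_eq_square)
    also have "\<dots> = of_nat (m + n + 1)" unfolding face_coeff_0_0 by simp
    finally have rhs: "of_nat ((m + n + 1)\<^sup>2) * face_coeff m n 0 0 = of_nat (m + n + 1)" .
    show ?thesis unfolding \<open>a = 0\<close> \<open>b = 0\<close> lhs rhs shift_coeffs_def by simp
  next
    case (Suc j)
    with k assms show ?thesis using face_coeff_recurrence_even[of a b j m n] by simp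
  qed
qed (simp add: face_coeff_odd shift_face_coeff_odd)

definition face_poly :: "nat \<Rightarrow> nat \<Rightarrow> complex \<Rightarrow> complex \<Rightarrow> complex" where
  "face_poly m n X Y = bipoly (face_coeff m n) m n X Y"

lemma face_poly_0_0: "face_poly 0 0 X Y = 1"
  unfolding face_poly_def bipoly_def face_coeff_def cab_def by simp

lemma face_poly_swap: "face_poly m n X Y = face_poly n m Y X"
  unfolding face_poly_def by (subst bipoly_swap) (simp add: face_coeff_swap)

lemma face_poly_recurrence:
  "of_nat ((m + n + 2) * (m + n + 1)) * face_poly (m + 1) n X Y =
    of_nat ((m + n + 1)\<^sup>2) * X * face_poly m n X Y
    - of_nat (m * (m + 2 * n + 1)) * face_poly (m - 1) n X Y
    - of_nat (2 * n\<^sup>2) * face_poly m (n - 1) X Y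
    + of_nat (n * (n - 1)) * face_poly (m + 1) (n - 2) X Y"
proof -
  have "X * face_poly m n X Y = bipoly (face_coeff m n) (m + 1) n X Y"
    unfolding face_poly_def using bipoly_mult_X[of "face_coeff m n" m] by (simp add: face_coeff_eq_0)
  moreover have "of_nat (m * (m + 2 * n + 1)) * face_poly (m - 1) n X Y =
      bipoly (\<lambda>a b. of_nat (m * (m + 2 * n + 1)) * shift_coeffs 2 0 (face_coeff (m - 1) n) a b)
        (m + 1) n X Y"
    unfolding face_poly_def by (rule bipoly_pad_scaled) (cases m, simp_all)
  moreover have "of_nat (2 * n\<^sup>2) * face_poly m (n - 1) X Y =
      bipoly (\<lambda>a b. of_nat (2 * n\<^sup>2) * shift_coeffs 1 1 (face_coeff m (n - 1)) a b)
        (m + 1) n X Y"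
    unfolding face_poly_def by (rule bipoly_pad_scaled) simp
  moreover have "of_nat (n * (n - 1)) * face_poly (m + 1) (n - 2) X Y =
      bipoly (\<lambda>a b. of_nat (n * (n - 1)) * shift_coeffs 0 2 (face_coeff (m + 1) (n - 2)) a b)
        (m + 1) n X Y"
    unfolding face_poly_def by (rule bipoly_pad_scaled) auto
  moreover have "of_nat ((m + n + 2) * (m + n + 1)) * face_poly (m + 1) n X Y =
      bipoly (\<lambda>a b. of_nat ((m + n + 1)\<^sup>2) * face_coeff m n a b
        - of_nat (m * (m + 2 * n + 1)) * shift_coeffs 2 0 (face_coeff (m - 1) n) a b
        - of_nat (2 * n\<^sup>2) * shift_coeffs 1 1 (face_coeff m (n - 1)) a b
        + of_nat (n * (n - 1)) * shift_coeffs 0 2 (face_coeff (m + 1) (n - 2)) a b) (m + 1) n X Y"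
    unfolding face_poly_def bipoly_cmult[symmetric] by (rule bipoly_cong) (rule face_coeff_recurrence)
  ultimately show ?thesis
    by (simp only: bipoly_add bipoly_diff bipoly_cmult mult.assoc)
qed

section \<open>Recurrences on the face\<close>

text \<open>
  With truncated subtraction the terms f (m - 1) n, f m (n - 1), f (m + 1) (n - 2) and f 0 (n - 1)
  stand for junk values whenever the index would be negative, but exactly then their coefficients
  vanish.
\<close>

definition face_recurrent :: "complex \<Rightarrow> complex \<Rightarrow> (nat \<Rightarrow> nat \<Rightarrow> complex) \<Rightarrow> bool" where
  "face_recurrent X Y f \<longleftrightarrow>
    (\<forall>n. of_nat ((n + 2) * (n + 1)) * f 0 (n + 1) =
      of_nat ((n + 1)\<^sup>2) * Y * f 0 n - of_nat (n * (n + 1)) * f 0 (n - 1)) \<and>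
    (\<forall>m n. of_nat ((m + n + 2) * (m + n + 1)) * f (m + 1) n =
      of_nat ((m + n + 1)\<^sup>2) * X * f m n - of_nat (m * (m + 2 * n + 1)) * f (m - 1) n
      - of_nat (2 * n\<^sup>2) * f m (n - 1) + of_nat (n * (n - 1)) * f (m + 1) (n - 2))"

lemma face_recurrent_unique:
  assumes f: "face_recurrent X Y f" and g: "face_recurrent X Y g" and "f 0 0 = g 0 0"
  shows "f m n = g m n"
proof (induction "m + n" arbitrary: m n rule: less_induct)
  case less
  have nonzero: "(of_nat ((k + 2) * (k + 1)) :: complex) \<noteq> 0" for k
    by (simp only: of_nat_eq_0_iff) simp
  consider "m = 0" "n = 0" | k where "m = 0" "n = k + 1" | k where "m = k + 1"
    by (metis add.commute add_0 not0_implies_Suc plus_1_eq_Suc)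
  then show ?case
  proof cases
    case 1
    then show ?thesis using assms(3) by simp
  next
    case (2 k)
    have "of_nat ((k + 2) * (k + 1)) * f 0 (k + 1) = of_nat ((k + 2) * (k + 1)) * g 0 (k + 1)"
      using f g less[of 0 k] less[of 0 "k - 1"] 2 unfolding face_recurrent_def by simp
    then show ?thesis using nonzero 2 by simp
  next
    case (3 k)
    have "of_nat (n * (n - 1)) * f (k + 1) (n - 2) = of_nat (n * (n - 1)) * g (k + 1) (n - 2)"
      using less[of "k + 1" "n - 2"] 3 by (cases "n < 2") auto
    then have "of_nat ((k + n + 2) * (k + n + 1)) * f (k + 1) n =
        of_nat ((k + n + 2) * (k + n + 1)) * g (k + 1) n"
      using f g less[of k n] less[of "k - 1" n] less[of k "n - 1"] 3 unfolding face_recurrent_def by simp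
    then show ?thesis using nonzero[of "k + n"] 3 by (simp add: add_ac)
  qed
qed

lemma face_recurrent_face_poly: "face_recurrent X Y (\<lambda>m n. face_poly m n X Y)"
  unfolding face_recurrent_def
proof (intro conjI allI)
  fix n
  show "of_nat ((n + 2) * (n + 1)) * face_poly 0 (n + 1) X Y =
      of_nat ((n + 1)\<^sup>2) * Y * face_poly 0 n X Y - of_nat (n * (n + 1)) * face_poly 0 (n - 1) X Y"
    using face_poly_recurrence[of n 0 Y X] by (simp add: face_poly_swap[of 0])
qed (rule face_poly_recurrence)

section \<open>The Schur relations on the face\<close>

definition Kc_numer :: "int \<Rightarrow> int \<Rightarrow> int \<Rightarrow> int \<Rightarrow> int \<Rightarrow> int" where
  "Kc_numer a b j1 j2 j3 = a * b * ((a * j1 + b * j2 + j3 + a + b + 2) * (a * j1 + b * j2 - j3 + a + b))"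

lemma Kc_cleared:
  assumes "0 \<le> j1" "0 \<le> j2"
  shows "of_int (4 * (j1 + 1) * (j2 + 1)) * Kc a b j1 j2 j3 = of_int (Kc_numer a b j1 j2 j3)"
proof -
  define d :: complex where "d = of_int (4 * (j1 + 1) * (j2 + 1))"
  have "d \<noteq> 0" using assms unfolding d_def of_int_eq_0_iff by simp
  then show ?thesis unfolding Kc_def Kc_numer_def d_def[symmetric] of_int_mult[of "a * b"] by simp
qed

lemma Kc_sum_cleared:
  assumes "0 \<le> j1" "0 \<le> j2"
  shows "of_int (4 * (j1 + 1) * (j2 + 1)) * (\<Sum>a\<in>{-1,1}. \<Sum>b\<in>{-1,1}. Kc a b j1 j2 j3 * g a b) =
    of_int (Kc_numer (-1) (-1) j1 j2 j3) * g (-1) (-1) + of_int (Kc_numer (-1) 1 j1 j2 j3) * g (-1) 1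
  + of_int (Kc_numer 1 (-1) j1 j2 j3) * g 1 (-1) + of_int (Kc_numer 1 1 j1 j2 j3) * g 1 1"
proof -
  have "of_int (4 * (j1 + 1) * (j2 + 1)) * (\<Sum>a\<in>{-1,1}. \<Sum>b\<in>{-1,1}. Kc a b j1 j2 j3 * g a b) =
      (\<Sum>a\<in>{-1,1}. \<Sum>b\<in>{-1,1}. (of_int (4 * (j1 + 1) * (j2 + 1)) * Kc a b j1 j2 j3) * g a b)"
    by (simp only: sum_distrib_left mult.assoc)
  also have "\<dots> = (\<Sum>a\<in>{-1,1}. \<Sum>b\<in>{-1,1}. of_int (Kc_numer a b j1 j2 j3) * g a b)"
    unfolding Kc_cleared[OF assms] ..
  finally show ?thesis by (simp add: add.assoc)
qed

lemma genus2_schur_relations: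
  assumes "genus2_schur \<phi>" "admissible j1 j2 j3" "x \<noteq> 0" "y \<noteq> 0" "z \<noteq> 0"
  shows "(x + 1/x) * \<phi> j1 j2 j3 x y z =
          (\<Sum>a\<in>{-1,1}. \<Sum>b\<in>{-1,1}. Kc a b j1 j2 j3 * phiA \<phi> (j1+a) (j2+b) j3 x y z)"
    and "(y + 1/y) * \<phi> j1 j2 j3 x y z =
          (\<Sum>a\<in>{-1,1}. \<Sum>b\<in>{-1,1}. Kc a b j1 j3 j2 * phiA \<phi> (j1+a) j2 (j3+b) x y z)"
    and "(z + 1/z) * \<phi> j1 j2 j3 x y z =
          (\<Sum>a\<in>{-1,1}. \<Sum>b\<in>{-1,1}. Kc a b j2 j3 j1 * phiA \<phi> j1 (j2+a) (j3+b) x y z)"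
  using assms(1)[unfolded genus2_schur_def, THEN conjunct2, THEN conjunct2, rule_format, OF assms(2-5)]
  by blast+

definition schur_face :: "(int \<Rightarrow> int \<Rightarrow> int \<Rightarrow> complex \<Rightarrow> complex \<Rightarrow> complex \<Rightarrow> complex) \<Rightarrow>
    complex \<Rightarrow> complex \<Rightarrow> nat \<Rightarrow> nat \<Rightarrow> complex" where
  "schur_face \<phi> x y m n = \<phi> (int (m + n)) (int m) (int n) x y 1"

lemma admissible_face: "admissible (int (m + n)) (int m) (int n)"
  unfolding admissible_def by simp

lemma phiA_face: "phiA \<phi> (int (m + n)) (int m) (int n) x y 1 = schur_face \<phi> x y m n"
  unfolding phiA_def schur_face_def using admissible_face by simp

lemma of_int_4_int_mult: "of_int (4 * int k) * t = 4 * (of_nat k * (t :: complex))"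
  by simp

lemma schur_face_relation_x:
  assumes "genus2_schur \<phi>" "x \<noteq> 0" "y \<noteq> 0"
  shows "of_nat ((m + n + 1) * (m + 1)) * ((x + 1/x) * schur_face \<phi> x y m n) =
    of_nat ((m + n + 2) * (m + 1)) * schur_face \<phi> x y (m + 1) n
    + of_nat ((m + n + 1) * m) * schur_face \<phi> x y (m - 1) n
    + of_nat n * phiA \<phi> (int (m + n) - 1) (int m + 1) (int n) x y 1"
proof -
  let ?k = "\<lambda>a b. Kc_numer a b (int (m + n)) (int m) (int n)"
    and ?g = "\<lambda>a b. phiA \<phi> (int (m + n) + a) (int m + b) (int n) x y 1"
  have "(x + 1/x) * schur_face \<phi> x y m n =
      (\<Sum>a\<in>{-1,1}. \<Sum>b\<in>{-1,1}. Kc a b (int (m + n)) (int m) (int n) * ?g a b)"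
    unfolding schur_face_def
    by (rule genus2_schur_relations(1)[OF assms(1) admissible_face assms(2,3) one_neq_zero])
  then have E: "of_int (4 * (int (m + n) + 1) * (int m + 1)) * ((x + 1/x) * schur_face \<phi> x y m n) =
      of_int (?k (-1) (-1)) * ?g (-1) (-1) + of_int (?k (-1) 1) * ?g (-1) 1
    + of_int (?k 1 (-1)) * ?g 1 (-1) + of_int (?k 1 1) * ?g 1 1"
    by (simp only: Kc_sum_cleared[OF of_nat_0_le_iff of_nat_0_le_iff])
  have K: "4 * (int (m + n) + 1) * (int m + 1) = 4 * int ((m + n + 1) * (m + 1))"
    "?k (-1) (-1) = 4 * int ((m + n + 1) * m)" "?k (-1) 1 = 4 * int n" "?k 1 (-1) = 0"
    "?k 1 1 = 4 * int ((m + n + 2) * (m + 1))"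
    unfolding Kc_numer_def by (simp_all add: algebra_simps)
  have P: "phiA \<phi> (int (m + n) + 1) (int m + 1) (int n) x y 1 = schur_face \<phi> x y (m + 1) n"
    "of_nat ((m + n + 1) * m) * phiA \<phi> (int (m + n) + -1) (int m + -1) (int n) x y 1 =
      of_nat ((m + n + 1) * m) * schur_face \<phi> x y (m - 1) n"
    "int (m + n) + -1 = int (m + n) - 1"
    using phiA_face[of \<phi> "m + 1" n] phiA_face[of \<phi> "m - 1" n]
    by (simp add: add_ac, cases m, simp_all add: add_ac)
  from E[unfolded K of_int_4_int_mult P(1,2) of_int_0 mult_zero_left add_0_right, unfolded P(3)]
  show ?thesis by algebra
qed

lemma schur_face_relation_z:
  assumes "genus2_schur \<phi>" "x \<noteq> 0" "y \<noteq> 0"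
  shows "of_nat ((m + 1) * (n + 1)) * (2 * schur_face \<phi> x y m n) =
    of_nat (m + n + 2) * phiA \<phi> (int (m + n)) (int m + 1) (int n + 1) x y 1
    + of_nat (n * (m + 1)) * schur_face \<phi> x y (m + 1) (n - 1)
    + of_nat (m * (n + 1)) * schur_face \<phi> x y (m - 1) (n + 1)"
proof -
  let ?k = "\<lambda>a b. Kc_numer a b (int m) (int n) (int (m + n))"
    and ?g = "\<lambda>a b. phiA \<phi> (int (m + n)) (int m + a) (int n + b) x y 1"
  have "(1 + 1/1) * schur_face \<phi> x y m n =
      (\<Sum>a\<in>{-1,1}. \<Sum>b\<in>{-1,1}. Kc a b (int m) (int n) (int (m + n)) * ?g a b)"
    unfolding schur_face_def
    by (rule genus2_schur_relations(3)[OF assms(1) admissible_face assms(2,3) one_neq_zero])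
  then have E: "of_int (4 * (int m + 1) * (int n + 1)) * (2 * schur_face \<phi> x y m n) =
      of_int (?k (-1) (-1)) * ?g (-1) (-1) + of_int (?k (-1) 1) * ?g (-1) 1
    + of_int (?k 1 (-1)) * ?g 1 (-1) + of_int (?k 1 1) * ?g 1 1"
    by (simp only: Kc_sum_cleared[OF of_nat_0_le_iff of_nat_0_le_iff] div_by_1 one_add_one)
  have K: "4 * (int m + 1) * (int n + 1) = 4 * int ((m + 1) * (n + 1))"
    "?k (-1) (-1) = 0" "?k (-1) 1 = 4 * int (m * (n + 1))" "?k 1 (-1) = 4 * int (n * (m + 1))"
    "?k 1 1 = 4 * int (m + n + 2)"
    unfolding Kc_numer_def by (simp_all add: algebra_simps)
  have P: "of_nat (n * (m + 1)) * phiA \<phi> (int (m + n)) (int m + 1) (int n + -1) x y 1 =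
      of_nat (n * (m + 1)) * schur_face \<phi> x y (m + 1) (n - 1)"
    "of_nat (m * (n + 1)) * phiA \<phi> (int (m + n)) (int m + -1) (int n + 1) x y 1 =
      of_nat (m * (n + 1)) * schur_face \<phi> x y (m - 1) (n + 1)"
    using phiA_face[of \<phi> "m + 1" "n - 1"] phiA_face[of \<phi> "m - 1" "n + 1"]
    by (cases n, simp_all add: add_ac, cases m, simp_all add: add_ac)
  from E[unfolded K of_int_4_int_mult P of_int_0 mult_zero_left add_0_left]
  show ?thesis by algebra
qed

lemma schur_face_relation_y:
  assumes "genus2_schur \<phi>" "x \<noteq> 0" "y \<noteq> 0"
  shows "of_nat ((n + 1)\<^sup>2) * ((y + 1/y) * schur_face \<phi> x y 0 n) =
    of_nat ((n + 2) * (n + 1)) * schur_face \<phi> x y 0 (n + 1)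
    + of_nat (n * (n + 1)) * schur_face \<phi> x y 0 (n - 1)"
proof -
  let ?k = "\<lambda>a b. Kc_numer a b (int n) (int n) 0"
    and ?g = "\<lambda>a b. phiA \<phi> (int n + a) 0 (int n + b) x y 1"
  have "(y + 1/y) * schur_face \<phi> x y 0 n =
      (\<Sum>a\<in>{-1,1}. \<Sum>b\<in>{-1,1}. Kc a b (int n) (int n) 0 * ?g a b)"
    using genus2_schur_relations(2)[OF assms(1) admissible_face[of 0 n] assms(2,3) one_neq_zero]
    unfolding schur_face_def by simp
  then have E: "of_int (4 * (int n + 1) * (int n + 1)) * ((y + 1/y) * schur_face \<phi> x y 0 n) =
      of_int (?k (-1) (-1)) * ?g (-1) (-1) + of_int (?k (-1) 1) * ?g (-1) 1
    + of_int (?k 1 (-1)) * ?g 1 (-1) + of_int (?k 1 1) * ?g 1 1"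
    by (simp only: Kc_sum_cleared[OF of_nat_0_le_iff of_nat_0_le_iff])
  have K: "4 * (int n + 1) * (int n + 1) = 4 * int ((n + 1)\<^sup>2)"
    "?k (-1) (-1) = 4 * int (n * (n + 1))" "?k (-1) 1 = 0" "?k 1 (-1) = 0"
    "?k 1 1 = 4 * int ((n + 2) * (n + 1))"
    unfolding Kc_numer_def by (simp_all add: algebra_simps power2_eq_square)
  have P: "phiA \<phi> (int n + 1) 0 (int n + 1) x y 1 = schur_face \<phi> x y 0 (n + 1)"
    using phiA_face[of \<phi> 0 "n + 1"] by (simp add: add.commute)
  have Q: "of_nat (n * (n + 1)) * phiA \<phi> (int n + -1) 0 (int n + -1) x y 1 =
      of_nat (n * (n + 1)) * schur_face \<phi> x y 0 (n - 1)"
  proof (cases n)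
    case (Suc k)
    then show ?thesis using phiA_face[of \<phi> 0 k] by simp
  qed simp
  from E[unfolded K of_int_4_int_mult P Q of_int_0 mult_zero_left add_0_right]
  show ?thesis by algebra
qed

lemma schur_face_recurrent:
  assumes "genus2_schur \<phi>" "x \<noteq> 0" "y \<noteq> 0"
  shows "face_recurrent (x + 1/x) (y + 1/y) (schur_face \<phi> x y)"
  unfolding face_recurrent_def
proof (intro conjI allI)
  fix n
  show "of_nat ((n + 2) * (n + 1)) * schur_face \<phi> x y 0 (n + 1) =
      of_nat ((n + 1)\<^sup>2) * (y + 1/y) * schur_face \<phi> x y 0 n
      - of_nat (n * (n + 1)) * schur_face \<phi> x y 0 (n - 1)"
    using schur_face_relation_y[OF assms, of n] by algebra
next
  fix m n
  let ?f = "schur_face \<phi> x y" and ?I = "phiA \<phi> (int (m + n) - 1) (int m + 1) (int n) x y 1"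
  \<comment> \<open>The z-relation at (m, n - 1) expresses the off-face value ?I through values on the face.\<close>
  have elim: "of_nat n * (of_nat (m + n + 1) * ?I) =
      of_nat n * (2 * of_nat (n * (m + 1)) * ?f m (n - 1)
        - of_nat ((n - 1) * (m + 1)) * ?f (m + 1) (n - 2) - of_nat (m * n) * ?f (m - 1) n)"
  proof (cases "n = 0")
    case False
    then have "n - 1 + 1 = n" "n - 1 - 1 = n - 2" "m + (n - 1) + 2 = m + n + 1"
      "int (m + (n - 1)) = int (m + n) - 1" "int (n - 1) + 1 = int n" by auto
    from schur_face_relation_z[OF assms, of m "n - 1", unfolded this]
    show ?thesis unfolding of_nat_mult of_nat_add of_nat_1 by algebra
  qed simp
  \<comment> \<open>Substituting it into the x-relation; the coefficients of ?f (m - 1) n match because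
    (m + n + 1)^2 - n^2 = (m + 1) (m + 2 n + 1).\<close>
  have "of_nat (m + 1) * (of_nat ((m + n + 2) * (m + n + 1)) * ?f (m + 1) n) =
      of_nat (m + 1) * (of_nat ((m + n + 1)\<^sup>2) * (x + 1/x) * ?f m n
      - of_nat (m * (m + 2 * n + 1)) * ?f (m - 1) n
      - of_nat (2 * n\<^sup>2) * ?f m (n - 1) + of_nat (n * (n - 1)) * ?f (m + 1) (n - 2))"
    using schur_face_relation_x[OF assms, of m n] elim
    unfolding of_nat_mult of_nat_add of_nat_power of_nat_numeral of_nat_1 by algebra
  then show "of_nat ((m + n + 2) * (m + n + 1)) * ?f (m + 1) n =
      of_nat ((m + n + 1)\<^sup>2) * (x + 1/x) * ?f m n - of_nat (m * (m + 2 * n + 1)) * ?f (m - 1) n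
      - of_nat (2 * n\<^sup>2) * ?f m (n - 1) + of_nat (n * (n - 1)) * ?f (m + 1) (n - 2)"
    by (metis mult_left_cancel of_nat_eq_0_iff add_eq_0_iff_both_eq_0 one_neq_zero)
qed

theorem mainTheorem14:
  fixes \<phi> :: "int \<Rightarrow> int \<Rightarrow> int \<Rightarrow> complex \<Rightarrow> complex \<Rightarrow> complex \<Rightarrow> complex"
    and j1 j2 :: nat and x y :: complex
  assumes "genus2_schur \<phi>"
    and "j2 \<le> j1"
    and "x \<noteq> 0" and "y \<noteq> 0"
  shows "\<phi> (int j1) (int j2) (int (j1 - j2)) x y 1 =
    (\<Sum>a=0..j2. \<Sum>b=0..j1-j2. cab j1 j2 a b * (x + 1/x)^(j2 - a) * (y + 1/y)^(j1 - j2 - b))"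
proof -
  have "schur_face \<phi> x y 0 0 = face_poly 0 0 (x + 1/x) (y + 1/y)"
    using assms(1,3,4) unfolding schur_face_def face_poly_0_0 genus2_schur_def by simp
  with schur_face_recurrent[OF assms(1,3,4)] face_recurrent_face_poly
  have "schur_face \<phi> x y j2 (j1 - j2) = face_poly j2 (j1 - j2) (x + 1/x) (y + 1/y)"
    by (rule face_recurrent_unique)
  with assms(2) show ?thesis
    unfolding schur_face_def face_poly_def bipoly_def face_coeff_def by simp
qed

end
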